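(* Let $\mathcal{I}$ be an interpreted system, $i$ an agent, $\phi$ any formula, and $S,T$ indexical sets of agents such that the formula $S\subseteq T$ is valid in $\mathcal{I}$. Then the formulas $B^T_i\phi\Rightarrow B^S_i\phi$, $C_T\phi\Rightarrow C_S\phi$ and $CB_T\phi\Rightarrow CB_S\phi$ are valid in $\mathcal{I}$.
   Context: Agents are $\mathrm{Agt}=\{1,\dots,n\}$. An interpreted system $\mathcal{I}=(\mathcal{R},\pi)$ consists of a set $\mathcal{R}$ of runs, each run $r$ being a function from times $m\in\mathbb{N}$ to global states $(s_e,s_1,\dots,s_n)$ (an environment state and a local state for each agent), and an interpretation $\pi$ assigning to each point a set of true atomic propositions; $r_i(m)$ denotes agent $i$'s local state. A point is a pair $(r,m)$. For an agent $i$, $(r,m)\sim_i(r',m')$ iff $r_i(m)=r'_i(m')$. Formulas are built from atomic propositions by boolean connectives and the operators below. $K_i\phi$ holds at $(r,m)$ iff $\phi$ holds at every point $(r',m')$ of $\mathcal{I}$ with $(r,m)\sim_i(r',m')$. An indexical set $S$ assigns to each point a set $S(r,m)\subseteq\mathrm{Agt}$; the atomic formula $i\in S$ holds at $(r,m)$ iff $i\in S(r,m)$, and $S\subseteq T$ holds at $(r,m)$ iff $S(r,m)\subseteq T(r,m)$. Define $B^S_i\phi:=K_i(i\in S\Rightarrow\phi)$; $E^B_S\phi:=\bigwedge_{i\in S}B^S_i\phi$ and $E_S\phi:=\bigwedge_{i\in S}K_i\phi$ (conjunctions over $i\in S(r,m)$ at the point of evaluation); common belief $CB_S\phi:=\bigwedge_{k\ge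 1}(E^B_S)^k\phi$ and common knowledge $C_S\phi:=\bigwedge_{k\ge1}E_S^k\phi$. A formula is valid in $\mathcal{I}$ if it holds at every point of $\mathcal{I}$. *)

theory Defs
  imports Main
begin

text \<open>Global states: an environment state and a local state for each agent.
  Agents form a finite type (playing the role of Agt = {1..n}).\<close>
type_synonym ('e, 'agt, 'l) gstate = "'e \<times> ('agt \<Rightarrow> 'l)"
type_synonym ('e, 'agt, 'l) run = "nat \<Rightarrow> ('e, 'agt, 'l) gstate"
type_synonym ('e, 'agt, 'l) point = "('e, 'agt, 'l) run \<times> nat"

type_synonym ('e, 'agt, 'l) indexical = "('e, 'agt, 'l) point \<Rightarrow> 'agt set"

record ('e, 'agt, 'l, 'p) isys =
  runs :: "('e, 'agt, 'l) run set"
  interp :: "('e, 'agt, 'l) point \<Rightarrow> 'p set"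

definition loc :: "('e, 'agt, 'l) point \<Rightarrow> 'agt \<Rightarrow> 'l" where
  "loc pt i = snd ((fst pt) (snd pt)) i"

definition knowsP :: "('e, 'agt, 'l, 'p) isys \<Rightarrow> 'agt \<Rightarrow> (('e, 'agt, 'l) point \<Rightarrow> bool)
    \<Rightarrow> ('e, 'agt, 'l) point \<Rightarrow> bool" where
  "knowsP I i P pt = (\<forall>r' \<in> runs I. \<forall>m'. loc pt i = loc (r', m') i \<longrightarrow> P (r', m'))"

definition everyBP :: "('e, 'agt, 'l, 'p) isys \<Rightarrow> ('e, 'agt, 'l) indexical
    \<Rightarrow> (('e, 'agt, 'l) point \<Rightarrow> bool) \<Rightarrow> ('e, 'agt, 'l) point \<Rightarrow> bool" where
  "everyBP I S P pt = (\<forall>i \<in> S pt. knowsP I i (\<lambda>q. i \<in> S q \<longrightarrow> P q) pt)"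

definition everyP :: "('e, 'agt, 'l, 'p) isys \<Rightarrow> ('e, 'agt, 'l) indexical
    \<Rightarrow> (('e, 'agt, 'l) point \<Rightarrow> bool) \<Rightarrow> ('e, 'agt, 'l) point \<Rightarrow> bool" where
  "everyP I S P pt = (\<forall>i \<in> S pt. knowsP I i P pt)"

definition commonBP :: "('e, 'agt, 'l, 'p) isys \<Rightarrow> ('e, 'agt, 'l) indexical
    \<Rightarrow> (('e, 'agt, 'l) point \<Rightarrow> bool) \<Rightarrow> ('e, 'agt, 'l) point \<Rightarrow> bool" where
  "commonBP I S P pt = (\<forall>k\<ge>1. ((everyBP I S) ^^ k) P pt)"

definition commonP :: "('e, 'agt, 'l, 'p) isys \<Rightarrow> ('e, 'agt, 'l) indexical
    \<Rightarrow> (('e, 'agt, 'l) point \<Rightarrow> bool) \<Rightarrow> ('e, 'agt, 'l) point \<Rightarrow> bool" where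
  "commonP I S P pt = (\<forall>k\<ge>1. ((everyP I S) ^^ k) P pt)"

datatype ('e, 'agt, 'l, 'p) fml =
    Atom 'p
  | InSet 'agt "('e, 'agt, 'l) indexical"
  | SubSet "('e, 'agt, 'l) indexical" "('e, 'agt, 'l) indexical"
  | Neg "('e, 'agt, 'l, 'p) fml"
  | Conj "('e, 'agt, 'l, 'p) fml" "('e, 'agt, 'l, 'p) fml"
  | Imp "('e, 'agt, 'l, 'p) fml" "('e, 'agt, 'l, 'p) fml"
  | K 'agt "('e, 'agt, 'l, 'p) fml"
  | EB "('e, 'agt, 'l) indexical" "('e, 'agt, 'l, 'p) fml"
  | E "('e, 'agt, 'l) indexical" "('e, 'agt, 'l, 'p) fml"
  | CB "('e, 'agt, 'l) indexical" "('e, 'agt, 'l, 'p) fml"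
  | C "('e, 'agt, 'l) indexical" "('e, 'agt, 'l, 'p) fml"

definition B :: "'agt \<Rightarrow> ('e, 'agt, 'l) indexical \<Rightarrow> ('e, 'agt, 'l, 'p) fml \<Rightarrow> ('e, 'agt, 'l, 'p) fml" where
  "B i S \<phi> = K i (Imp (InSet i S) \<phi>)"

primrec sat :: "('e, 'agt, 'l, 'p) isys \<Rightarrow> ('e, 'agt, 'l) point \<Rightarrow> ('e, 'agt, 'l, 'p) fml \<Rightarrow> bool" where
  "sat I pt (Atom p) = (p \<in> interp I pt)"
| "sat I pt (InSet i S) = (i \<in> S pt)"
| "sat I pt (SubSet S T) = (S pt \<subseteq> T pt)"
| "sat I pt (Neg \<phi>) = (\<not> sat I pt \<phi>)"
| "sat I pt (Conj \<phi> \<psi>) = (sat I pt \<phi> \<and> sat I pt \<psi>)"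
| "sat I pt (Imp \<phi> \<psi>) = (sat I pt \<phi> \<longrightarrow> sat I pt \<psi>)"
| "sat I pt (K i \<phi>) = knowsP I i (\<lambda>q. sat I q \<phi>) pt"
| "sat I pt (EB S \<phi>) = everyBP I S (\<lambda>q. sat I q \<phi>) pt"
| "sat I pt (E S \<phi>) = everyP I S (\<lambda>q. sat I q \<phi>) pt"
| "sat I pt (CB S \<phi>) = commonBP I S (\<lambda>q. sat I q \<phi>) pt"
| "sat I pt (C S \<phi>) = commonP I S (\<lambda>q. sat I q \<phi>) pt"

definition valid :: "('e, 'agt, 'l, 'p) isys \<Rightarrow> ('e, 'agt, 'l, 'p) fml \<Rightarrow> bool" where
  "valid I \<phi> = (\<forall>r \<in> runs I. \<forall>m. sat I (r, m) \<phi>)"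

end

theory Submission
  imports Defs
begin

text \<open>All operators quantify only over points of the system, so it suffices that \<open>S \<subseteq> T\<close>
  holds at those points: then \<open>B\<^sup>T\<^sub>i\<close>, \<open>E\<^sub>T\<close> and \<open>E\<^sup>B\<^sub>T\<close> are weaker than their \<open>S\<close>-versions,
  and since \<open>E\<^sub>S\<close> and \<open>E\<^sup>B\<^sub>S\<close> are monotone, this comparison propagates to every iterate
  and hence to common knowledge and common belief.\<close>

definition points :: "('e, 'agt, 'l, 'p) isys \<Rightarrow> ('e, 'agt, 'l) point set" where
  "points I = {(r, m). r \<in> runs I}"

lemma valid_iff_points: "valid I \<phi> \<longleftrightarrow> (\<forall>pt \<in> points I. sat I pt \<phi>)"
  by (auto simp: valid_def points_def)

lemma valid_SubSet_iff: "valid I (SubSet S T) \<longleftrightarrow> (\<forall>pt \<in> points I. S pt \<subseteq> T pt)"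
  by (simp add: valid_iff_points)

lemma funpow_le_on:
  assumes G_mono: "\<And>P Q x. \<forall>y \<in> D. P y \<longrightarrow> Q y \<Longrightarrow> G P x \<Longrightarrow> G Q x"
    and F_le_G: "\<And>P x. x \<in> D \<Longrightarrow> F P x \<Longrightarrow> G P x"
  shows "x \<in> D \<Longrightarrow> (F ^^ k) P x \<Longrightarrow> (G ^^ k) P x"
proof (induction k arbitrary: x)
  case 0
  then show ?case by simp
next
  case (Suc k)
  have "G ((F ^^ k) P) x"
    using Suc.prems F_le_G by simp
  then show ?case
    using G_mono[of "(F ^^ k) P" "(G ^^ k) P"] Suc by simp
qed

lemma knowsP_mono:
  assumes "\<forall>q \<in> points I. P q \<longrightarrow> Q q" and "knowsP I i P pt"
  shows "knowsP I i Q pt"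
  using assms by (auto simp: knowsP_def points_def)

lemma everyP_mono:
  "\<forall>q \<in> points I. P q \<longrightarrow> Q q \<Longrightarrow> everyP I S P pt \<Longrightarrow> everyP I S Q pt"
  unfolding everyP_def using knowsP_mono[of I P Q] by blast

lemma everyBP_mono:
  assumes "\<forall>q \<in> points I. P q \<longrightarrow> Q q" and "everyBP I S P pt"
  shows "everyBP I S Q pt"
  unfolding everyBP_def
proof
  fix i assume "i \<in> S pt"
  with assms(2) have "knowsP I i (\<lambda>q. i \<in> S q \<longrightarrow> P q) pt"
    by (simp add: everyBP_def)
  then show "knowsP I i (\<lambda>q. i \<in> S q \<longrightarrow> Q q) pt"
    by (rule knowsP_mono[rotated]) (use assms(1) in blast)
qed

lemma everyP_antimono: "S pt \<subseteq> T pt \<Longrightarrow> everyP I T P pt \<Longrightarrow> everyP I S P pt"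
  by (auto simp: everyP_def)

lemma everyBP_antimono:
  assumes "\<forall>q \<in> points I. S q \<subseteq> T q" and "pt \<in> points I" and "everyBP I T P pt"
  shows "everyBP I S P pt"
  unfolding everyBP_def
proof
  fix i assume "i \<in> S pt"
  with assms have "knowsP I i (\<lambda>q. i \<in> T q \<longrightarrow> P q) pt"
    by (auto simp: everyBP_def)
  then show "knowsP I i (\<lambda>q. i \<in> S q \<longrightarrow> P q) pt"
    by (rule knowsP_mono[rotated]) (use assms(1) in blast)
qed

lemma commonP_antimono:
  assumes "\<forall>q \<in> points I. S q \<subseteq> T q" and "pt \<in> points I" and "commonP I T P pt"
  shows "commonP I S P pt"
proof -
  have antimono: "everyP I S P' x" if "x \<in> points I" and "everyP I T P' x" for P' x
    using that assms(1) everyP_antimono by blast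
  have "(everyP I S ^^ k) P pt" if "(everyP I T ^^ k) P pt" for k
    by (rule funpow_le_on[where D = "points I", OF everyP_mono antimono assms(2) that])
  then show ?thesis
    using assms(3) by (simp add: commonP_def)
qed

lemma commonBP_antimono:
  assumes "\<forall>q \<in> points I. S q \<subseteq> T q" and "pt \<in> points I" and "commonBP I T P pt"
  shows "commonBP I S P pt"
proof -
  have "(everyBP I S ^^ k) P pt" if "(everyBP I T ^^ k) P pt" for k
    by (rule funpow_le_on[OF everyBP_mono everyBP_antimono[OF assms(1)] assms(2) that])
  then show ?thesis
    using assms(3) by (simp add: commonBP_def)
qed

lemma sat_B_antimono:
  assumes "\<forall>q \<in> points I. S q \<subseteq> T q" and "sat I pt (B i T \<phi>)"
  shows "sat I pt (B i S \<phi>)"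
  using assms(2) unfolding B_def sat.simps
  by (rule knowsP_mono[rotated]) (use assms(1) in blast)

theorem proposition1:
  fixes I :: "('e, 'agt::finite, 'l, 'p) isys"
    and i :: 'agt and \<phi> :: "('e, 'agt, 'l, 'p) fml"
    and S T :: "('e, 'agt, 'l) indexical"
  assumes "valid I (SubSet S T)"
  shows "valid I (Imp (B i T \<phi>) (B i S \<phi>)) \<and>
         valid I (Imp (C T \<phi>) (C S \<phi>)) \<and>
         valid I (Imp (CB T \<phi>) (CB S \<phi>))"
proof (intro conjI)
  have sub: "\<forall>q \<in> points I. S q \<subseteq> T q"
    using assms by (simp add: valid_SubSet_iff)
  show "valid I (Imp (B i T \<phi>) (B i S \<phi>))"
    by (auto simp: valid_iff_points intro: sat_B_antimono[OF sub])
  show "valid I (Imp (C T \<phi>) (C S \<phi>))"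
    by (auto simp: valid_iff_points intro: commonP_antimono[OF sub])
  show "valid I (Imp (CB T \<phi>) (CB S \<phi>))"
    by (auto simp: valid_iff_points intro: commonBP_antimono[OF sub])
qed

end
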